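(* Let $p\ge2$ and $A\in GL_n(\mathbb{C}(z))$ be such that the system $\phi_p(Y)=AY$ is regular singular at $\infty$. Then there exist $F_\infty\in GL_n(\mathcal{M}(\mathbb{P}^1(\mathbb{C})\setminus\overline{D}(0,1)))$ and $A_\infty\in GL_n(\mathbb{C})$ such that $\phi_p(F_\infty)^{-1}AF_\infty=A_\infty$.
   Context: $\phi_p$ acts entrywise by $f(z)\mapsto f(z^p)$. The system is regular singular at $\infty$ if there exists $T\in GL_n(\mathbb{C}(\{1/z\}))$ (convergent Laurent series in $1/z$) such that $B=\phi_p(T)^{-1}AT$ is regular at $\infty$, i.e. $B(1/z)$ has entries analytic at $0$ and is invertible at $0$. $\mathcal{M}(U)$ denotes the meromorphic functions on $U$ and $\overline{D}(0,1)$ the closed unit disk. *)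

theory Defs
  imports "HOL-Complex_Analysis.Complex_Analysis"
begin

text \<open>A function C -> C is (the evaluation of) a rational function in C(z):
  it agrees with P/Q (Q a nonzero polynomial) away from the zeros of Q.
  Values at the finitely many poles are irrelevant.\<close>
definition rational_fun :: "(complex \<Rightarrow> complex) \<Rightarrow> bool" where
  "rational_fun f \<longleftrightarrow> (\<exists>P Q :: complex poly. Q \<noteq> 0 \<and>
      (\<forall>z. poly Q z \<noteq> 0 \<longrightarrow> f z = poly P z / poly Q z))"

definition phi :: "nat \<Rightarrow> (complex \<Rightarrow> 'a) \<Rightarrow> complex \<Rightarrow> 'a" where
  "phi p f = (\<lambda>z. f (z ^ p))"

definition GL_rat :: "(complex \<Rightarrow> complex^'n::finite^'n) \<Rightarrow> bool" where
  "GL_rat A \<longleftrightarrow> (\<forall>i j. rational_fun (\<lambda>z. A z $ i $ j)) \<and>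
      (\<forall>\<^sub>\<approx>z. det (A z) \<noteq> 0)"

text \<open>Regular singularity at infinity of phi_p(Y) = A Y: there is T in GL_n(C({1/z}))
  (entries are germs at infinity of meromorphic functions, i.e. T(1/w) meromorphic at 0,
  with determinant not identically zero) such that B = phi_p(T)^{-1} A T is regular at
  infinity: B(1/w) extends analytically to w = 0 with invertible value there.\<close>
definition regular_singular_at_infinity ::
    "nat \<Rightarrow> (complex \<Rightarrow> complex^'n::finite^'n) \<Rightarrow> bool" where
  "regular_singular_at_infinity p A \<longleftrightarrow>
     (\<exists>T :: complex \<Rightarrow> complex^'n^'n.
        (\<forall>i j. (\<lambda>w. T (1 / w) $ i $ j) meromorphic_on {0}) \<and>
        (\<forall>\<^sub>F w in at 0. det (T (1 / w)) \<noteq> 0) \<and>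
        (\<exists>B0 :: complex \<Rightarrow> complex^'n^'n.
           (\<forall>i j. (\<lambda>w. B0 w $ i $ j) analytic_on {0}) \<and> det (B0 0) \<noteq> 0 \<and>
           (\<forall>\<^sub>F w in at 0.
              B0 w = (let z = 1 / w in matrix_inv (phi p T z) ** A z ** T z))))"

end

(*
  In the coordinate w = 1/z the gauge transformation T turns the system into
  phi_p(Y) = B(w) Y with B analytic and invertible at w = 0.  There
  B(w) G(w) = G(w^p) B(0) is solved by the iteration G_0 = I,
  G_(k+1)(w) = B(w)^-1 G_k(w^p) B(0): its successive differences are
  O(|w|^(p^k)), so it converges uniformly near 0 to an analytic G with G(0) = I.
  Then F0(z) = T(z) G(1/z) satisfies A F0 = phi_p(F0) B(0) for large |z|, and
  the functional equation F(z) = A(z)^-1 F(z^p) B(0) continues F0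
  meromorphically to all of |z| > 1, because finitely many steps z |-> z^p
  carry any such z into the region where F0 is defined.
*)

theory Submission
  imports Defs
begin

no_notation fps_nth (infixl \<open>$\<close> 75)

lemma matrix_inv_right:
  fixes X :: "'a::field^'n^'n"
  assumes "det X \<noteq> 0"
  shows "X ** matrix_inv X = mat 1"
  using assms invertible_det_nz[of X] someI_ex[of "\<lambda>Y. X ** Y = mat 1 \<and> Y ** X = mat 1"]
  unfolding invertible_def matrix_inv_def by blast

lemma matrix_inv_left:
  fixes X :: "'a::field^'n^'n"
  assumes "det X \<noteq> 0"
  shows "matrix_inv X ** X = mat 1"
  using assms invertible_det_nz[of X] someI_ex[of "\<lambda>Y. X ** Y = mat 1 \<and> Y ** X = mat 1"]
  unfolding invertible_def matrix_inv_def by blast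

lemma det_matrix_inv_nonzero:
  fixes X :: "'a::field^'n^'n"
  assumes "det X \<noteq> 0"
  shows "det (matrix_inv X) \<noteq> 0"
  using det_mul[of X "matrix_inv X"] matrix_inv_right[OF assms] by auto

lemma matrix_inv_nth:
  fixes X :: "'a::field^'n^'n"
  assumes "det X \<noteq> 0"
  shows "matrix_inv X $ i $ j =
           det (\<chi> a b. if b = i then (if a = j then 1 else 0) else X $ a $ b) / det X"
proof -
  define e where "e = (\<chi> a. if a = j then 1 else (0::'a))"
  have "X *v (\<chi> k. matrix_inv X $ k $ j) = (\<chi> a. (X ** matrix_inv X) $ a $ j)"
    by (simp add: vec_eq_iff matrix_vector_mult_def matrix_matrix_mult_def)
  also have "\<dots> = e"
    using matrix_inv_right[OF assms] by (simp add: vec_eq_iff mat_def e_def)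
  finally have "(\<chi> k. matrix_inv X $ k $ j) = (\<chi> k. det (\<chi> a b. if b = k then e $ a else X $ a $ b) / det X)"
    using cramer[OF assms] by blast
  then show ?thesis
    by (auto simp: vec_eq_iff e_def dest: spec[of _ i] cong: if_cong)
qed

lemma matrix_diff_ldistrib:
  fixes A :: "'a::ring_1^'n^'m"
  shows "A ** (B - C) = A ** B - A ** C"
  by (simp add: vec_eq_iff matrix_matrix_mult_def sum_subtractf algebra_simps)

lemma matrix_diff_rdistrib:
  fixes A :: "'a::ring_1^'n^'m"
  shows "(A - B) ** C = A ** C - B ** C"
  by (simp add: vec_eq_iff matrix_matrix_mult_def sum_subtractf algebra_simps)

lemma matrix_gauge_transform:
  fixes P :: "'a::field^'n^'n"
  assumes "det P \<noteq> 0" "(matrix_inv P ** A ** Q) ** G = G' ** C"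
  shows "A ** (Q ** G) = (P ** G') ** C"
proof -
  have "A ** (Q ** G) = P ** ((matrix_inv P ** A ** Q) ** G)"
    by (simp add: matrix_mul_assoc matrix_inv_right[OF assms(1)])
  then show ?thesis
    using assms(2) by (simp add: matrix_mul_assoc)
qed

text \<open>Entrywise \<open>\<ell>\<^sup>1\<close> norm: it dominates the Euclidean norm of the vector type and is
  submultiplicative, which is all the convergence estimates below need.\<close>

definition matrix_l1_norm :: "'a::real_normed_vector^'n^'m \<Rightarrow> real" where
  "matrix_l1_norm M = (\<Sum>i\<in>UNIV. \<Sum>j\<in>UNIV. norm (M $ i $ j))"

lemma matrix_l1_norm_nonneg: "matrix_l1_norm M \<ge> 0"
  unfolding matrix_l1_norm_def by (intro sum_nonneg) auto

lemma norm_le_matrix_l1_norm: "norm (M :: 'a::real_normed_vector^'n^'m) \<le> matrix_l1_norm M"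
proof -
  have norm_le_sum: "norm x \<le> (\<Sum>i\<in>UNIV. norm (x $ i))" for x :: "'v::real_normed_vector^'k"
    unfolding norm_vec_def by (rule L2_set_le_sum) auto
  have "norm M \<le> (\<Sum>i\<in>UNIV. norm (M $ i))" by (rule norm_le_sum)
  also have "\<dots> \<le> matrix_l1_norm M"
    unfolding matrix_l1_norm_def by (intro sum_mono norm_le_sum)
  finally show ?thesis .
qed

lemma matrix_l1_norm_mult:
  fixes M :: "'a::real_normed_algebra_1^'n^'m" and N :: "'a^'k^'n"
  shows "matrix_l1_norm (M ** N) \<le> matrix_l1_norm M * matrix_l1_norm N"
proof -
  have row_le: "(\<Sum>j\<in>UNIV. norm (N $ l $ j)) \<le> matrix_l1_norm N" for l
    unfolding matrix_l1_norm_def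
    by (rule member_le_sum[where f = "\<lambda>l. \<Sum>j\<in>UNIV. norm (N $ l $ j)", simplified])
       (auto intro: sum_nonneg)
  have "matrix_l1_norm (M ** N) \<le> (\<Sum>i\<in>UNIV. \<Sum>j\<in>UNIV. \<Sum>l\<in>UNIV. norm (M $ i $ l) * norm (N $ l $ j))"
    unfolding matrix_l1_norm_def matrix_matrix_mult_def
    by (auto intro!: sum_mono order.trans[OF norm_sum] norm_mult_ineq)
  also have "\<dots> = (\<Sum>i\<in>UNIV. \<Sum>l\<in>UNIV. norm (M $ i $ l) * (\<Sum>j\<in>UNIV. norm (N $ l $ j)))"
    by (simp add: sum_distrib_left sum.swap[of _ "UNIV :: 'k set"])
  also have "\<dots> \<le> (\<Sum>i\<in>UNIV. \<Sum>l\<in>UNIV. norm (M $ i $ l) * matrix_l1_norm N)"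
    by (intro sum_mono mult_left_mono row_le) auto
  also have "\<dots> = matrix_l1_norm M * matrix_l1_norm N"
    unfolding matrix_l1_norm_def by (simp add: sum_distrib_right)
  finally show ?thesis .
qed

lemma tendsto_matrix_mult:
  fixes f :: "'b \<Rightarrow> 'a::real_normed_algebra_1^'n^'m" and g :: "'b \<Rightarrow> 'a^'k^'n"
  assumes "(f \<longlongrightarrow> a) F" "(g \<longlongrightarrow> b) F"
  shows "((\<lambda>x. f x ** g x) \<longlongrightarrow> a ** b) F"
proof (intro vec_tendstoI)
  fix i j
  have "((\<lambda>x. \<Sum>l\<in>UNIV. f x $ i $ l * g x $ l $ j) \<longlongrightarrow> (\<Sum>l\<in>UNIV. a $ i $ l * b $ l $ j)) F"
    by (intro tendsto_intros assms)
  then show "((\<lambda>x. (f x ** g x) $ i $ j) \<longlongrightarrow> (a ** b) $ i $ j) F"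
    by (simp add: matrix_matrix_mult_def)
qed

lemma norm_power_le_norm:
  fixes w :: "'a::real_normed_div_algebra"
  assumes "norm w \<le> 1" "p \<ge> 1"
  shows "norm (w ^ p) \<le> norm w"
  using power_decreasing[of 1 p "norm w"] assms by (simp add: norm_power)

lemma power_mem_ball_0:
  fixes w :: "'a::real_normed_div_algebra"
  assumes "w \<in> ball 0 \<rho>" "\<rho> \<le> 1" "p \<ge> 1"
  shows "w ^ p \<in> ball 0 \<rho>"
  using assms norm_power_le_norm[of w p] by auto

lemma power_mem_cball_0:
  fixes w :: "'a::real_normed_div_algebra"
  assumes "w \<in> cball 0 \<rho>" "\<rho> \<le> 1" "p \<ge> 1"
  shows "w ^ p \<in> cball 0 \<rho>"
  using assms norm_power_le_norm[of w p] by auto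

lemma exponent_le_power:
  assumes "p \<ge> 2"
  shows "k \<le> p ^ k"
  using less_exp[of k] power_mono[of 2 p k] assms by linarith

lemma inverse_mem_punctured_ball_iff:
  fixes z :: complex
  assumes "0 < \<rho>"
  shows "1 / z \<in> ball 0 \<rho> - {0} \<longleftrightarrow> 1 / \<rho> < norm z"
proof (cases "z = 0")
  case False
  then have "norm (1 / z) < \<rho> \<longleftrightarrow> 1 / \<rho> < norm z"
    using assms by (simp add: norm_divide divide_less_eq mult.commute)
  with False show ?thesis by simp
qed (use assms in simp)

section \<open>Matrix-valued analytic and meromorphic functions\<close>

definition matrix_analytic_on :: "(complex \<Rightarrow> complex^'n^'m) \<Rightarrow> complex set \<Rightarrow> bool" where
  "matrix_analytic_on F U \<longleftrightarrow> (\<forall>i j. (\<lambda>z. F z $ i $ j) analytic_on U)"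

definition matrix_meromorphic_on :: "(complex \<Rightarrow> complex^'n^'m) \<Rightarrow> complex set \<Rightarrow> bool" where
  "matrix_meromorphic_on F U \<longleftrightarrow> (\<forall>i j. (\<lambda>z. F z $ i $ j) meromorphic_on U)"

lemma matrix_analytic_imp_meromorphic:
  "matrix_analytic_on F U \<Longrightarrow> matrix_meromorphic_on F U"
  unfolding matrix_analytic_on_def matrix_meromorphic_on_def
  using analytic_on_imp_meromorphic_on by blast

lemma matrix_analytic_on_analytic_at:
  "matrix_analytic_on F U \<longleftrightarrow> (\<forall>z\<in>U. matrix_analytic_on F {z})"
proof -
  have "(\<lambda>z. F z $ i $ j) analytic_on U \<longleftrightarrow> (\<forall>z\<in>U. (\<lambda>z. F z $ i $ j) analytic_on {z})" for i j
    by (rule analytic_on_analytic_at)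
  then show ?thesis unfolding matrix_analytic_on_def by blast
qed

lemma matrix_meromorphic_on_imp_eventually_analytic:
  assumes "matrix_meromorphic_on F {z}"
  shows "eventually (\<lambda>w. matrix_analytic_on F {w}) (at z)"
  unfolding matrix_analytic_on_def
proof (intro eventually_all_finite)
  fix i j
  show "eventually (\<lambda>w. (\<lambda>z. F z $ i $ j) analytic_on {w}) (at z)"
    using assms meromorphic_on_isolated_singularity isolated_singularity_at_altdef
    unfolding matrix_meromorphic_on_def by blast
qed

lemma matrix_analytic_on_const: "matrix_analytic_on (\<lambda>z. C) U"
  unfolding matrix_analytic_on_def by auto

lemma matrix_meromorphic_on_const: "matrix_meromorphic_on (\<lambda>z. C) U"
  unfolding matrix_meromorphic_on_def by auto

lemma matrix_analytic_on_mult: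
  "matrix_analytic_on F U \<Longrightarrow> matrix_analytic_on G U \<Longrightarrow> matrix_analytic_on (\<lambda>z. F z ** G z) U"
  unfolding matrix_analytic_on_def matrix_matrix_mult_def by (auto intro!: analytic_intros)

lemma matrix_meromorphic_on_mult:
  "matrix_meromorphic_on F U \<Longrightarrow> matrix_meromorphic_on G U \<Longrightarrow>
     matrix_meromorphic_on (\<lambda>z. F z ** G z) U"
  unfolding matrix_meromorphic_on_def matrix_matrix_mult_def by (auto intro!: meromorphic_intros)

lemma matrix_analytic_on_diff:
  "matrix_analytic_on F U \<Longrightarrow> matrix_analytic_on G U \<Longrightarrow> matrix_analytic_on (\<lambda>z. F z - G z) U"
  unfolding matrix_analytic_on_def by (auto intro!: analytic_intros)

lemma matrix_analytic_on_det:
  "matrix_analytic_on F U \<Longrightarrow> (\<lambda>z. det (F z)) analytic_on U"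
  unfolding matrix_analytic_on_def det_def by (auto intro!: analytic_intros)

lemma matrix_meromorphic_on_det:
  "matrix_meromorphic_on F U \<Longrightarrow> (\<lambda>z. det (F z)) meromorphic_on U"
  unfolding matrix_meromorphic_on_def det_def by (auto intro!: meromorphic_intros)

lemma matrix_analytic_on_subset:
  "matrix_analytic_on F V \<Longrightarrow> U \<subseteq> V \<Longrightarrow> matrix_analytic_on F U"
  unfolding matrix_analytic_on_def using analytic_on_subset by blast

lemma matrix_meromorphic_on_subset:
  "matrix_meromorphic_on F V \<Longrightarrow> U \<subseteq> V \<Longrightarrow> matrix_meromorphic_on F U"
  unfolding matrix_meromorphic_on_def using meromorphic_on_subset by blast

lemma matrix_analytic_on_compose:
  "matrix_analytic_on F V \<Longrightarrow> g analytic_on U \<Longrightarrow> g ` U \<subseteq> V \<Longrightarrow>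
     matrix_analytic_on (\<lambda>z. F (g z)) U"
  unfolding matrix_analytic_on_def
  using analytic_on_compose_gen[of g U _ V] by (auto simp: o_def image_subset_iff)

lemma matrix_meromorphic_on_compose:
  "matrix_meromorphic_on F V \<Longrightarrow> g analytic_on U \<Longrightarrow> g ` U \<subseteq> V \<Longrightarrow>
     matrix_meromorphic_on (\<lambda>z. F (g z)) U"
  unfolding matrix_meromorphic_on_def using meromorphic_on_compose[of _ V g U] by blast

lemma matrix_meromorphic_on_cong:
  assumes "eventually (\<lambda>z. F z = G z) (cosparse U)" "matrix_meromorphic_on F U"
  shows "matrix_meromorphic_on G U"
  unfolding matrix_meromorphic_on_def
proof (intro allI)
  fix i j
  have "eventually (\<lambda>z. F z $ i $ j = G z $ i $ j) (cosparse U)"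
    using assms(1) by eventually_elim simp
  then have "(\<lambda>z. F z $ i $ j) meromorphic_on U \<longleftrightarrow> (\<lambda>z. G z $ i $ j) meromorphic_on U"
    by (rule meromorphic_on_cong'[OF _ refl])
  then show "(\<lambda>z. G z $ i $ j) meromorphic_on U"
    using assms(2) unfolding matrix_meromorphic_on_def by blast
qed

lemma matrix_meromorphic_on_cong_at:
  assumes "eventually (\<lambda>z. F z = G z) (at z0)" "matrix_meromorphic_on F {z0}"
  shows "matrix_meromorphic_on G {z0}"
  unfolding matrix_meromorphic_on_def
proof (intro allI)
  fix i j
  have "eventually (\<lambda>z. F z $ i $ j = G z $ i $ j) (at z0)"
    using assms(1) by eventually_elim simp
  then have "(\<lambda>z. F z $ i $ j) meromorphic_on {z0} \<longleftrightarrow> (\<lambda>z. G z $ i $ j) meromorphic_on {z0}"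
    by (intro meromorphic_on_cong) auto
  then show "(\<lambda>z. G z $ i $ j) meromorphic_on {z0}"
    using assms(2) unfolding matrix_meromorphic_on_def by blast
qed

lemma matrix_analytic_on_inverse:
  fixes F :: "complex \<Rightarrow> complex^'n^'n"
  assumes "open U" "matrix_analytic_on F U" "\<And>z. z \<in> U \<Longrightarrow> det (F z) \<noteq> 0"
  shows "matrix_analytic_on (\<lambda>z. matrix_inv (F z)) U"
  unfolding matrix_analytic_on_def
proof (intro allI)
  fix i j
  let ?N = "\<lambda>z. (\<chi> a b. if b = i then (if a = j then 1 else 0) else F z $ a $ b) :: complex^'n^'n"
  have "matrix_analytic_on ?N U"
    unfolding matrix_analytic_on_def
  proof (intro allI)
    fix a b
    show "(\<lambda>z. ?N z $ a $ b) analytic_on U"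
      using assms(2) unfolding matrix_analytic_on_def by (cases "b = i") auto
  qed
  then have "(\<lambda>z. det (?N z) / det (F z)) holomorphic_on U"
    using assms by (intro analytic_imp_holomorphic analytic_on_divide matrix_analytic_on_det)
  then have "(\<lambda>z. matrix_inv (F z) $ i $ j) holomorphic_on U"
    by (rule holomorphic_transform) (simp add: assms(3) matrix_inv_nth)
  then show "(\<lambda>z. matrix_inv (F z) $ i $ j) analytic_on U"
    using assms(1) by (simp add: analytic_on_open)
qed

lemma matrix_meromorphic_on_inverse:
  fixes F :: "complex \<Rightarrow> complex^'n^'n"
  assumes "matrix_meromorphic_on F U" "eventually (\<lambda>z. det (F z) \<noteq> 0) (cosparse U)"
  shows "matrix_meromorphic_on (\<lambda>z. matrix_inv (F z)) U"
  unfolding matrix_meromorphic_on_def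
proof (intro allI)
  fix i j
  let ?N = "\<lambda>z. (\<chi> a b. if b = i then (if a = j then 1 else 0) else F z $ a $ b) :: complex^'n^'n"
  have "matrix_meromorphic_on ?N U"
    unfolding matrix_meromorphic_on_def
  proof (intro allI)
    fix a b
    show "(\<lambda>z. ?N z $ a $ b) meromorphic_on U"
      using assms(1) unfolding matrix_meromorphic_on_def by (cases "b = i") auto
  qed
  then have "(\<lambda>z. det (?N z) / det (F z)) meromorphic_on U"
    using assms(1) by (intro meromorphic_on_divide matrix_meromorphic_on_det)
  moreover have "eventually (\<lambda>z. det (?N z) / det (F z) = matrix_inv (F z) $ i $ j) (cosparse U)"
    using assms(2) by eventually_elim (simp add: matrix_inv_nth)
  ultimately show "(\<lambda>z. matrix_inv (F z) $ i $ j) meromorphic_on U"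
    by (subst (asm) meromorphic_on_cong'[OF _ refl])
qed

lemma matrix_analytic_on_exterior:
  assumes "0 < \<rho>" "matrix_analytic_on (\<lambda>w. F (1 / w)) (ball 0 \<rho> - {0})"
  shows "matrix_analytic_on F {z. 1 / \<rho> < norm z}"
proof -
  have "(\<lambda>z. 1 / z) analytic_on {z::complex. 1 / \<rho> < norm z}"
    using assms(1) by (intro analytic_intros) auto
  moreover have "(\<lambda>z. 1 / z) ` {z::complex. 1 / \<rho> < norm z} \<subseteq> ball 0 \<rho> - {0}"
    by (intro image_subsetI) (use inverse_mem_punctured_ball_iff[OF assms(1)] in blast)
  ultimately have "matrix_analytic_on (\<lambda>z. F (1 / (1 / z))) {z. 1 / \<rho> < norm z}"
    by (rule matrix_analytic_on_compose[OF assms(2)])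
  then show ?thesis by simp
qed

lemma matrix_analytic_on_uniform_limit:
  fixes f :: "nat \<Rightarrow> complex \<Rightarrow> complex^'n^'m"
  assumes "open S" "\<And>k. matrix_analytic_on (f k) S" "uniform_limit S f g sequentially"
  shows "matrix_analytic_on g S"
  unfolding matrix_analytic_on_def
proof (intro allI)
  fix i j
  have "bounded_linear (\<lambda>M :: complex^'n^'m. M $ i $ j)"
    using bounded_linear_compose[OF bounded_linear_vec_nth[of j] bounded_linear_vec_nth[of i]]
    by (simp add: o_def)
  then have lim: "uniform_limit S (\<lambda>k z. f k z $ i $ j) (\<lambda>z. g z $ i $ j) sequentially"
    using bounded_linear.uniform_limit assms(3) by blast
  have "(\<lambda>z. g z $ i $ j) holomorphic_on S"
  proof (rule holomorphic_uniform_sequence[OF assms(1)])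
    show "(\<lambda>z. f k z $ i $ j) holomorphic_on S" for k
      using assms(1,2) unfolding matrix_analytic_on_def by (simp add: analytic_on_open)
    fix x assume "x \<in> S"
    then obtain d where "d > 0" "cball x d \<subseteq> S"
      using assms(1) open_contains_cball by blast
    then show "\<exists>d>0. cball x d \<subseteq> S \<and> uniform_limit (cball x d) (\<lambda>k z. f k z $ i $ j) (\<lambda>z. g z $ i $ j) sequentially"
      using uniform_limit_on_subset[OF lim] by blast
  qed
  then show "(\<lambda>z. g z $ i $ j) analytic_on S"
    using assms(1) by (simp add: analytic_on_open)
qed

lemma matrix_analytic_on_l1_norm_bounded:
  assumes "matrix_analytic_on B (ball 0 r)" "R < r"
  obtains c where "\<And>w. w \<in> cball 0 R \<Longrightarrow> matrix_l1_norm (B w) \<le> c"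
proof -
  have entry_cont: "continuous_on (cball 0 R) (\<lambda>w. B w $ i $ j)" for i j
    using assms unfolding matrix_analytic_on_def
    by (intro continuous_on_subset[OF holomorphic_on_imp_continuous_on[OF analytic_imp_holomorphic]])
       auto
  then have "continuous_on (cball 0 R) (\<lambda>w. matrix_l1_norm (B w))"
    unfolding matrix_l1_norm_def by (intro continuous_on_sum continuous_on_norm entry_cont)
  then have "bounded ((\<lambda>w. matrix_l1_norm (B w)) ` cball 0 R)"
    by (intro compact_imp_bounded compact_continuous_image) auto
  then obtain c where "\<forall>x\<in>(\<lambda>w. matrix_l1_norm (B w)) ` cball 0 R. norm x \<le> c"
    unfolding bounded_iff by blast
  then show ?thesis
    by (intro that[of c]) (auto simp: abs_le_iff)
qed

lemma analytic_vanishing_at_0_linear_bound: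
  fixes f :: "complex \<Rightarrow> complex"
  assumes "f analytic_on ball 0 r" "R < r" "f 0 = 0"
  obtains L where "L \<ge> 0" "\<And>w. w \<in> cball 0 R \<Longrightarrow> norm (f w) \<le> L * norm w"
proof -
  obtain h where h: "h holomorphic_on ball 0 r" and fh: "\<And>w. norm w < r \<Longrightarrow> f w = w * h w"
    using Schwarz3[of f r] assms by (auto simp: analytic_on_open)
  have "continuous_on (cball 0 R) h"
    using assms(2) by (intro holomorphic_on_imp_continuous_on holomorphic_on_subset[OF h]) auto
  then have "bounded (h ` cball 0 R)"
    by (intro compact_imp_bounded compact_continuous_image) auto
  then obtain L where L: "L > 0" "\<And>w. w \<in> cball 0 R \<Longrightarrow> norm (h w) \<le> L"
    unfolding bounded_pos by auto
  have "norm (f w) \<le> L * norm w" if "w \<in> cball 0 R" for w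
    using fh[of w] L(2)[OF that] that assms(2)
    by (simp add: norm_mult mult.commute[of L] mult_left_mono)
  with L(1) show ?thesis by (intro that[of L]) auto
qed

lemma matrix_analytic_vanishing_at_0_linear_bound:
  fixes E :: "complex \<Rightarrow> complex^'n^'m"
  assumes "matrix_analytic_on E (ball 0 r)" "R < r" "E 0 = 0"
  obtains L where "L \<ge> 0" "\<And>w. w \<in> cball 0 R \<Longrightarrow> matrix_l1_norm (E w) \<le> L * norm w"
proof -
  have "\<forall>i j. \<exists>L\<ge>0. \<forall>w\<in>cball 0 R. norm (E w $ i $ j) \<le> L * norm w"
  proof (intro allI)
    fix i j
    show "\<exists>L\<ge>0. \<forall>w\<in>cball 0 R. norm (E w $ i $ j) \<le> L * norm w"
      using assms unfolding matrix_analytic_on_def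
      by (metis (no_types, lifting) analytic_vanishing_at_0_linear_bound zero_index)
  qed
  then obtain Ls where Ls: "\<And>i j. Ls i j \<ge> 0"
    "\<And>i j w. w \<in> cball 0 R \<Longrightarrow> norm (E w $ i $ j) \<le> Ls i j * norm w"
    by metis
  show ?thesis
  proof (rule that[of "\<Sum>i\<in>UNIV. \<Sum>j\<in>UNIV. Ls i j"])
    show "(\<Sum>i\<in>UNIV. \<Sum>j\<in>UNIV. Ls i j) \<ge> 0" by (intro sum_nonneg Ls(1))
    fix w :: complex assume "w \<in> cball 0 R"
    then show "matrix_l1_norm (E w) \<le> (\<Sum>i\<in>UNIV. \<Sum>j\<in>UNIV. Ls i j) * norm w"
      unfolding matrix_l1_norm_def sum_distrib_right by (intro sum_mono Ls(2))
  qed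
qed

lemma rational_fun_meromorphic:
  assumes "rational_fun f"
  shows "f meromorphic_on UNIV"
proof -
  obtain P Q :: "complex poly"
    where "Q \<noteq> 0" and PQ: "\<And>z. poly Q z \<noteq> 0 \<Longrightarrow> f z = poly P z / poly Q z"
    using assms unfolding rational_fun_def by blast
  then have "finite {z. poly Q z = 0}" by (simp add: poly_roots_finite)
  then have "eventually (\<lambda>z. poly P z / poly Q z = f z) (cosparse UNIV)"
    unfolding eventually_cosparse
    by (rule sparse_in_subset2[OF finite_imp_sparse]) (use PQ in force)
  moreover have "(\<lambda>z. poly P z / poly Q z) meromorphic_on UNIV"
    unfolding poly_altdef by (intro meromorphic_intros)
  ultimately show ?thesis
    by (subst (asm) meromorphic_on_cong'[OF _ refl])
qed

section \<open>Solving the Mahler equation near the origin\<close>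

primrec mahler_iter ::
    "nat \<Rightarrow> (complex \<Rightarrow> complex^'n^'n) \<Rightarrow> complex^'n^'n \<Rightarrow> (complex \<Rightarrow> complex^'n^'n) \<Rightarrow>
       nat \<Rightarrow> complex \<Rightarrow> complex^'n^'n" where
  "mahler_iter p B C X 0 = X"
| "mahler_iter p B C X (Suc k) = (\<lambda>z. B z ** mahler_iter p B C X k (z ^ p) ** C)"

lemma matrix_analytic_on_mahler_iter:
  assumes "matrix_analytic_on B U" "matrix_analytic_on X U" "\<And>z. z \<in> U \<Longrightarrow> z ^ p \<in> U"
  shows "matrix_analytic_on (mahler_iter p B C X k) U"
proof (induction k)
  case (Suc k)
  have "matrix_analytic_on (\<lambda>z. mahler_iter p B C X k (z ^ p)) U"
    by (rule matrix_analytic_on_compose[OF Suc.IH]) (use assms(3) in \<open>auto intro!: analytic_intros\<close>)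
  then show ?case
    unfolding mahler_iter.simps
    by (intro matrix_analytic_on_mult matrix_analytic_on_const assms(1))
qed (use assms(2) in simp)

text \<open>The differences obey the same recursion as the iterates, so each step feeds \<open>w ^ p\<close>
  into the previous bound: the initial linear bound in \<open>norm w\<close> becomes one in
  \<open>norm w ^ p ^ k\<close>.\<close>

lemma mahler_iter_diff_bound:
  fixes B X :: "complex \<Rightarrow> complex^'n^'n"
  assumes "p \<ge> 1" "R \<le> 1"
    and B: "\<And>w. w \<in> cball 0 R \<Longrightarrow> matrix_l1_norm (B w) \<le> c"
    and X: "\<And>w. w \<in> cball 0 R \<Longrightarrow> matrix_l1_norm (B w ** X (w ^ p) ** C - X w) \<le> L * norm w"
    and "w \<in> cball 0 R"
  shows "matrix_l1_norm (mahler_iter p B C X (Suc k) w - mahler_iter p B C X k w)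
           \<le> (c * matrix_l1_norm C) ^ k * L * norm w ^ (p ^ k)"
  using \<open>w \<in> cball 0 R\<close>
proof (induction k arbitrary: w)
  case 0
  then show ?case using X by simp
next
  case (Suc k)
  let ?D = "\<lambda>k w. mahler_iter p B C X (Suc k) w - mahler_iter p B C X k w"
  have wp: "w ^ p \<in> cball 0 R"
    using Suc.prems assms(2,1) by (rule power_mem_cball_0)
  have c: "c \<ge> 0"
    using B[OF Suc.prems] matrix_l1_norm_nonneg order_trans by blast
  have "?D (Suc k) w = B w ** ?D k (w ^ p) ** C"
    by (simp add: matrix_diff_ldistrib matrix_diff_rdistrib)
  then have "matrix_l1_norm (?D (Suc k) w) \<le> matrix_l1_norm (B w ** ?D k (w ^ p)) * matrix_l1_norm C"
    by (simp add: matrix_l1_norm_mult)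
  also have "\<dots> \<le> matrix_l1_norm (B w) * matrix_l1_norm (?D k (w ^ p)) * matrix_l1_norm C"
    by (intro mult_right_mono matrix_l1_norm_mult matrix_l1_norm_nonneg)
  also have "\<dots> \<le> c * matrix_l1_norm (?D k (w ^ p)) * matrix_l1_norm C"
    by (intro mult_right_mono B Suc.prems matrix_l1_norm_nonneg)
  also have "\<dots> \<le> c * ((c * matrix_l1_norm C) ^ k * L * norm (w ^ p) ^ (p ^ k)) * matrix_l1_norm C"
    by (intro mult_right_mono[OF mult_left_mono[OF Suc.IH[OF wp] c]] matrix_l1_norm_nonneg)
  also have "\<dots> = (c * matrix_l1_norm C) ^ Suc k * L * norm w ^ (p ^ Suc k)"
  proof -
    have "norm (w ^ p) ^ (p ^ k) = norm w ^ (p ^ Suc k)"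
      by (simp add: norm_power power_mult[symmetric])
    then show ?thesis by (simp only: power_Suc mult_ac)
  qed
  finally show ?case .
qed

lemma uniformly_convergent_if_summable_differences:
  fixes H :: "nat \<Rightarrow> 'a \<Rightarrow> 'b::banach"
  assumes "\<And>k x. x \<in> S \<Longrightarrow> norm (H (Suc k) x - H k x) \<le> M k" "summable M"
  shows "uniformly_convergent_on S H"
proof -
  have "uniform_limit S (\<lambda>k x. H 0 x + (\<Sum>i<k. H (Suc i) x - H i x))
      (\<lambda>x. H 0 x + (\<Sum>i. H (Suc i) x - H i x)) sequentially"
    by (intro uniform_limit_intros Weierstrass_m_test[OF assms])
  moreover have "H 0 x + (\<Sum>i<k. H (Suc i) x - H i x) = H k x" for k x
    using sum_lessThan_telescope[of "\<lambda>i. H i x" k] by simp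
  ultimately show ?thesis
    unfolding uniformly_convergent_on_def by auto
qed

lemma mahler_iter_diff_geometric_bound:
  fixes B X :: "complex \<Rightarrow> complex^'n^'n"
  assumes "p \<ge> 2" "\<rho> \<le> R" "R \<le> 1" "L \<ge> 0"
    and B: "\<And>w. w \<in> cball 0 R \<Longrightarrow> matrix_l1_norm (B w) \<le> c"
    and X: "\<And>w. w \<in> cball 0 R \<Longrightarrow> matrix_l1_norm (B w ** X (w ^ p) ** C - X w) \<le> L * norm w"
    and small: "c * matrix_l1_norm C * \<rho> \<le> 1 / 2"
    and w: "w \<in> cball 0 \<rho>"
  shows "norm (mahler_iter p B C X (Suc k) w - mahler_iter p B C X k w) \<le> L * (1 / 2) ^ k"
proof -
  define a where "a = c * matrix_l1_norm C"
  have wR: "w \<in> cball 0 R" and "0 \<le> \<rho>"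
    using w assms(2) norm_ge_zero[of w] by (auto simp del: norm_ge_zero)
  have "a \<ge> 0"
    using B[OF wR] matrix_l1_norm_nonneg[of "B w"] matrix_l1_norm_nonneg[of C] by (simp add: a_def)
  have "norm w ^ (p ^ k) \<le> \<rho> ^ (p ^ k)"
    using w by (intro power_mono) auto
  also have "\<dots> \<le> \<rho> ^ k"
    using \<open>0 \<le> \<rho>\<close> assms(2,3) exponent_le_power[OF assms(1)] by (intro power_decreasing) auto
  finally have wk: "norm w ^ (p ^ k) \<le> \<rho> ^ k" .
  have "norm (mahler_iter p B C X (Suc k) w - mahler_iter p B C X k w)
      \<le> matrix_l1_norm (mahler_iter p B C X (Suc k) w - mahler_iter p B C X k w)"
    by (rule norm_le_matrix_l1_norm)
  also have "\<dots> \<le> a ^ k * L * norm w ^ (p ^ k)"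
    unfolding a_def by (rule mahler_iter_diff_bound[OF _ assms(3) B X wR]) (use assms(1) in auto)
  also have "\<dots> \<le> a ^ k * L * \<rho> ^ k"
    using wk \<open>a \<ge> 0\<close> assms(4) by (intro mult_left_mono) auto
  also have "\<dots> = L * (a * \<rho>) ^ k"
    by (simp add: power_mult_distrib)
  also have "\<dots> \<le> L * (1 / 2) ^ k"
  proof (intro mult_left_mono power_mono)
    show "a * \<rho> \<le> 1 / 2" using small by (simp add: a_def)
    show "0 \<le> a * \<rho>" using \<open>a \<ge> 0\<close> \<open>0 \<le> \<rho>\<close> by simp
  qed (rule assms(4))
  finally show ?thesis .
qed

lemma mahler_iter_uniform_limit:
  fixes B :: "complex \<Rightarrow> complex^'n^'n"
  assumes p: "p \<ge> 2" and r: "0 < r" "r \<le> 1"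
    and B: "matrix_analytic_on B (ball 0 r)" "B 0 ** C = mat 1"
  obtains \<rho> G where "0 < \<rho>" "\<rho> < r"
    "uniform_limit (cball 0 \<rho>) (mahler_iter p B C (\<lambda>_. mat 1)) G sequentially"
proof -
  define R where "R = r / 2"
  have R: "0 < R" "R < r" "R \<le> 1" using r by (auto simp: R_def)
  obtain c where c: "\<And>w. w \<in> cball 0 R \<Longrightarrow> matrix_l1_norm (B w) \<le> c"
    using matrix_analytic_on_l1_norm_bounded[OF B(1) R(2)] by blast
  have "matrix_analytic_on (\<lambda>w. B w ** C - mat 1) (ball 0 r)"
    by (intro matrix_analytic_on_diff matrix_analytic_on_mult matrix_analytic_on_const B(1))
  then obtain L where L: "L \<ge> 0"
    "\<And>w. w \<in> cball 0 R \<Longrightarrow> matrix_l1_norm (B w ** C - mat 1) \<le> L * norm w"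
    by (rule matrix_analytic_vanishing_at_0_linear_bound) (use R(2) B(2) in auto)
  define a where "a = \<bar>c\<bar> * matrix_l1_norm C"
  define \<rho> where "\<rho> = min R (1 / (2 * (a + 1)))"
  have "a \<ge> 0" by (simp add: a_def matrix_l1_norm_nonneg)
  have \<rho>: "0 < \<rho>" "\<rho> \<le> R" "\<bar>c\<bar> * matrix_l1_norm C * \<rho> \<le> 1 / 2"
  proof -
    have "a * \<rho> \<le> a * (1 / (2 * (a + 1)))"
      using \<open>a \<ge> 0\<close> by (intro mult_left_mono) (auto simp: \<rho>_def)
    also have "\<dots> \<le> 1 / 2"
      using \<open>a \<ge> 0\<close> by (simp add: field_simps)
    finally show "\<bar>c\<bar> * matrix_l1_norm C * \<rho> \<le> 1 / 2" by (simp add: a_def)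
  qed (use R \<open>a \<ge> 0\<close> in \<open>auto simp: \<rho>_def\<close>)
  have "uniformly_convergent_on (cball 0 \<rho>) (mahler_iter p B C (\<lambda>_. mat 1))"
  proof (rule uniformly_convergent_if_summable_differences)
    show "norm (mahler_iter p B C (\<lambda>_. mat 1) (Suc k) w - mahler_iter p B C (\<lambda>_. mat 1) k w)
        \<le> L * (1 / 2) ^ k" if "w \<in> cball 0 \<rho>" for k w
    proof (rule mahler_iter_diff_geometric_bound[of p \<rho> R L B "\<bar>c\<bar>"])
      show "matrix_l1_norm (B w) \<le> \<bar>c\<bar>" if "w \<in> cball 0 R" for w
        using c[OF that] by simp
      show "matrix_l1_norm (B w ** mat 1 ** C - mat 1) \<le> L * norm w" if "w \<in> cball 0 R" for w
        using L(2)[OF that] by simp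
    qed (use p \<rho> R L(1) that in auto)
  qed (intro summable_mult summable_geometric, simp)
  then obtain G where "uniform_limit (cball 0 \<rho>) (mahler_iter p B C (\<lambda>_. mat 1)) G sequentially"
    unfolding uniformly_convergent_on_def by blast
  moreover have "\<rho> < r" using \<rho> R by linarith
  ultimately show ?thesis using \<rho>(1) that by blast
qed

lemma mahler_iter_limit_solution:
  fixes Bi :: "complex \<Rightarrow> complex^'n^'n"
  assumes p: "p \<ge> 2" and r: "0 < r" "r \<le> 1"
    and Bi: "matrix_analytic_on Bi (ball 0 r)" "Bi 0 ** C = mat 1"
  obtains \<rho> G where "0 < \<rho>" "\<rho> < r" "matrix_analytic_on G (ball 0 \<rho>)" "G 0 = mat 1"
    "\<And>w. w \<in> ball 0 \<rho> \<Longrightarrow> G w = Bi w ** G (w ^ p) ** C"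
proof -
  obtain \<rho> G where \<rho>: "0 < \<rho>" "\<rho> < r"
    and lim: "uniform_limit (cball 0 \<rho>) (mahler_iter p Bi C (\<lambda>_. mat 1)) G sequentially"
    using mahler_iter_uniform_limit[OF p r Bi] by blast
  let ?H = "mahler_iter p Bi C (\<lambda>_. mat 1)"
  have H_tendsto: "(\<lambda>k. ?H k w) \<longlonglongrightarrow> G w" if "w \<in> cball 0 \<rho>" for w
    using lim that by (rule tendsto_uniform_limitI)
  show ?thesis
  proof (rule that[OF \<rho>])
    show "matrix_analytic_on G (ball 0 \<rho>)"
    proof (rule matrix_analytic_on_uniform_limit[OF open_ball])
      show "matrix_analytic_on (?H k) (ball 0 \<rho>)" for k
        using p \<rho> r power_mem_ball_0[of _ \<rho> p]
        by (intro matrix_analytic_on_mahler_iter matrix_analytic_on_subset[OF Bi(1)]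
            matrix_analytic_on_const) auto
      show "uniform_limit (ball 0 \<rho>) ?H G sequentially"
        using lim by (rule uniform_limit_on_subset) auto
    qed
    have "?H k 0 = mat 1" for k
      using p Bi(2) by (induction k) (simp_all add: zero_power)
    then show "G 0 = mat 1"
      using H_tendsto[of 0] \<rho> by (simp add: LIMSEQ_const_iff)
    fix w :: complex assume "w \<in> ball 0 \<rho>"
    then have w: "w \<in> cball 0 \<rho>" "w ^ p \<in> cball 0 \<rho>"
      using power_mem_cball_0[of w \<rho> p] p \<rho> r by auto
    show "G w = Bi w ** G (w ^ p) ** C"
    proof (rule LIMSEQ_unique)
      show "(\<lambda>k. ?H (Suc k) w) \<longlonglongrightarrow> G w"
        using H_tendsto[OF w(1)] by (rule LIMSEQ_Suc)
      show "(\<lambda>k. ?H (Suc k) w) \<longlonglongrightarrow> Bi w ** G (w ^ p) ** C"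
        using H_tendsto[OF w(2)] unfolding mahler_iter.simps
        by (intro tendsto_matrix_mult tendsto_const)
    qed
  qed
qed

lemma mahler_local_solution:
  fixes B :: "complex \<Rightarrow> complex^'n^'n"
  assumes p: "p \<ge> 2" and "0 < r"
    and B: "matrix_analytic_on B (ball 0 r)" "\<And>w. w \<in> ball 0 r \<Longrightarrow> det (B w) \<noteq> 0"
  obtains \<rho> G where "0 < \<rho>" "\<rho> \<le> r" "\<rho> \<le> 1" "matrix_analytic_on G (ball 0 \<rho>)"
    "\<And>w. w \<in> ball 0 \<rho> \<Longrightarrow> det (G w) \<noteq> 0"
    "\<And>w. w \<in> ball 0 \<rho> \<Longrightarrow> B w ** G w = G (w ^ p) ** B 0"
proof -
  define Bi where "Bi = (\<lambda>w. matrix_inv (B w))"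
  have "matrix_analytic_on Bi (ball 0 (min r 1))"
    unfolding Bi_def using B
    by (intro matrix_analytic_on_inverse matrix_analytic_on_subset[OF B(1)]) auto
  moreover have "Bi 0 ** B 0 = mat 1"
    unfolding Bi_def using B(2) \<open>0 < r\<close> by (intro matrix_inv_left) auto
  ultimately obtain \<rho> G where \<rho>: "0 < \<rho>" "\<rho> < min r 1"
    and G: "matrix_analytic_on G (ball 0 \<rho>)" "G 0 = mat 1"
      "\<And>w. w \<in> ball 0 \<rho> \<Longrightarrow> G w = Bi w ** G (w ^ p) ** B 0"
    using mahler_iter_limit_solution[OF p, of "min r 1" Bi "B 0"] \<open>0 < r\<close> by auto
  have "isCont (\<lambda>w. det (G w)) 0"
    using G(1) \<rho>(1)
    by (intro analytic_at_imp_isCont analytic_on_subset[OF matrix_analytic_on_det]) auto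
  moreover have "det (G 0) \<noteq> 0"
    using G(2) by simp
  ultimately obtain e where e: "e > 0" "\<And>w. dist 0 w < e \<Longrightarrow> det (G w) \<noteq> 0"
    using continuous_at_avoid by blast
  show ?thesis
  proof (rule that[of "min \<rho> e" G])
    show "0 < min \<rho> e" "min \<rho> e \<le> r" "min \<rho> e \<le> 1" using \<rho> e by auto
    show "matrix_analytic_on G (ball 0 (min \<rho> e))"
      using G(1) by (rule matrix_analytic_on_subset) auto
    fix w :: complex assume w: "w \<in> ball 0 (min \<rho> e)"
    then show "det (G w) \<noteq> 0" using e by auto
    have "B w ** G w = (B w ** Bi w) ** G (w ^ p) ** B 0"
      using G(3)[of w] w by (simp add: matrix_mul_assoc)
    also have "\<dots> = G (w ^ p) ** B 0"
      unfolding Bi_def using B(2) w \<rho> by (subst matrix_inv_right) auto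
    finally show "B w ** G w = G (w ^ p) ** B 0" .
  qed
qed

section \<open>Continuation to the exterior of the unit disc\<close>

lemma sparse_in_UNIV_power_preimage:
  fixes S :: "complex set"
  assumes "S sparse_in UNIV" "N > 0"
  shows "{z. z ^ N \<in> S} sparse_in UNIV"
  unfolding sparse_in_open[OF open_UNIV] islimpt_iff_eventually
proof (intro ballI notI)
  fix y :: complex
  have "eventually (\<lambda>x. x \<notin> S) (at (y ^ N))"
    using assms(1) unfolding sparse_in_open[OF open_UNIV] islimpt_iff_eventually by blast
  then obtain V where V: "open V" "y ^ N \<in> V" "\<And>x. x \<in> V \<Longrightarrow> x \<noteq> y ^ N \<Longrightarrow> x \<notin> S"
    unfolding eventually_at_topological by blast
  have "((\<lambda>z. z ^ N) \<longlongrightarrow> y ^ N) (at y)"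
    by (intro tendsto_intros)
  then have "eventually (\<lambda>z. z ^ N \<in> V) (at y)"
    using topological_tendstoD V(1,2) by blast
  moreover have "eventually (\<lambda>z. z \<notin> {z. z ^ N = y ^ N}) (at y)"
    using finite_nth_roots[OF assms(2)] islimpt_finite islimpt_iff_eventually by blast
  ultimately have "eventually (\<lambda>z. z \<notin> {z. z ^ N \<in> S}) (at y)"
    by eventually_elim (use V(3) in auto)
  moreover assume "\<not> eventually (\<lambda>z. z \<notin> {z. z ^ N \<in> S}) (at y)"
  ultimately show False by contradiction
qed

definition power_exterior :: "nat \<Rightarrow> real \<Rightarrow> nat \<Rightarrow> complex set" where
  "power_exterior p R k = {z. R < norm z ^ (p ^ k)}"

lemma open_power_exterior: "open (power_exterior p R k)"
  unfolding power_exterior_def by (intro open_Collect_less continuous_intros)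

lemma power_exterior_0: "power_exterior p R 0 = {z. R < norm z}"
  by (simp add: power_exterior_def)

lemma power_exterior_Suc_iff: "z \<in> power_exterior p R (Suc k) \<longleftrightarrow> z ^ p \<in> power_exterior p R k"
  by (simp add: power_exterior_def norm_power power_mult[symmetric])

lemma power_exterior_gt_1:
  assumes "R \<ge> 1" "z \<in> power_exterior p R k"
  shows "1 < norm z"
proof (rule ccontr)
  assume "\<not> 1 < norm z"
  then have "norm z ^ (p ^ k) \<le> 1" by (intro power_le_one) auto
  then show False using assms unfolding power_exterior_def by simp
qed

lemma power_exterior_mono:
  assumes "R \<ge> 1" "p \<ge> 1"
  shows "power_exterior p R k \<subseteq> power_exterior p R (Suc k)"
proof
  fix z assume z: "z \<in> power_exterior p R k"
  then have "1 < norm z ^ (p ^ k)" using assms(1) unfolding power_exterior_def by simp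
  then have "norm z ^ (p ^ k) \<le> (norm z ^ (p ^ k)) ^ p"
    using power_increasing[of 1 p "norm z ^ (p ^ k)"] assms(2) by simp
  then show "z \<in> power_exterior p R (Suc k)"
    using z unfolding power_exterior_def by (simp add: power_mult[symmetric] mult.commute)
qed

lemma exists_power_exterior:
  assumes "p \<ge> 2" "1 < norm z"
  obtains k where "z \<in> power_exterior p R k"
proof -
  obtain k where k: "R < norm z ^ k" using real_arch_pow[OF assms(2)] by blast
  also have "\<dots> \<le> norm z ^ (p ^ k)"
    using assms exponent_le_power[OF assms(1)] by (intro power_increasing) auto
  finally show ?thesis by (intro that[of k]) (simp add: power_exterior_def)
qed

locale mahler_extension =
  fixes p :: nat and R :: real and A F0 :: "complex \<Rightarrow> complex^'n^'n" and C :: "complex^'n^'n"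
  assumes p: "p \<ge> 2" and R: "R \<ge> 1"
    and A_meromorphic: "matrix_meromorphic_on A UNIV"
    and A_det: "\<forall>\<^sub>\<approx>z. det (A z) \<noteq> 0"
    and F0_analytic: "matrix_analytic_on F0 {z. R < norm z}"
    and F0_det: "\<And>z. R < norm z \<Longrightarrow> det (F0 z) \<noteq> 0"
    and F0_eq: "\<And>z. R < norm z \<Longrightarrow> A z ** F0 z = F0 (z ^ p) ** C"
    and C_det: "det C \<noteq> 0"
begin

text \<open>\<open>level z\<close> is unspecified when \<open>norm z \<le> 1\<close>; \<open>F\<close> is only meaningful for \<open>1 < norm z\<close>.\<close>

definition level :: "complex \<Rightarrow> nat" where
  "level z = (LEAST k. z \<in> power_exterior p R k)"

definition F :: "complex \<Rightarrow> complex^'n^'n" where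
  "F z = mahler_iter p (\<lambda>z. matrix_inv (A z)) C F0 (level z) z"

lemma F_eq_F0:
  assumes "R < norm z"
  shows "F z = F0 z"
proof -
  have "level z = 0"
    unfolding level_def using assms by (intro Least_eq_0) (simp add: power_exterior_0)
  then show ?thesis by (simp add: F_def)
qed

lemma F_step:
  assumes "z \<in> power_exterior p R k" "\<not> R < norm z"
  shows "F z = matrix_inv (A z) ** F (z ^ p) ** C"
proof -
  have z: "z \<in> power_exterior p R (level z)"
    unfolding level_def using assms(1) by (rule LeastI)
  then obtain j where j: "level z = Suc j"
    using assms(2) by (cases "level z") (auto simp: power_exterior_0)
  have "level (z ^ p) = j"
    unfolding level_def
  proof (rule Least_equality)
    show "z ^ p \<in> power_exterior p R j"
      using z j power_exterior_Suc_iff by simp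
    show "j \<le> i" if "z ^ p \<in> power_exterior p R i" for i
      using that Least_le[of "\<lambda>k. z \<in> power_exterior p R k" "Suc i"] j
      unfolding level_def by (simp add: power_exterior_Suc_iff)
  qed
  then show ?thesis by (simp add: F_def j)
qed

lemma A_mult_F:
  assumes "1 < norm z" "det (A z) \<noteq> 0"
  shows "A z ** F z = F (z ^ p) ** C"
proof (cases "R < norm z")
  case True
  have "norm z \<le> norm (z ^ p)"
    using assms(1) p power_increasing[of 1 p "norm z"] by (simp add: norm_power)
  with True show ?thesis by (simp add: F_eq_F0 F0_eq)
next
  case False
  obtain k where "z \<in> power_exterior p R k"
    using exists_power_exterior[OF p assms(1)] by blast
  then have "A z ** F z = (A z ** matrix_inv (A z)) ** F (z ^ p) ** C"
    using False by (simp add: F_step matrix_mul_assoc)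
  then show ?thesis by (simp add: matrix_inv_right[OF assms(2)])
qed

lemma F_meromorphic_on_power_exterior: "matrix_meromorphic_on F (power_exterior p R k)"
proof (induction k)
  case 0
  have "eventually (\<lambda>z. F0 z = F z) (cosparse (power_exterior p R 0))"
    using eventually_in_cosparse[OF order.refl open_power_exterior]
    by eventually_elim (simp add: F_eq_F0 power_exterior_0)
  then show ?case
    using F0_analytic
    by (intro matrix_meromorphic_on_cong[OF _ matrix_analytic_imp_meromorphic])
       (simp_all add: power_exterior_0)
next
  case (Suc k)
  let ?U = "power_exterior p R (Suc k)"
  have "eventually (\<lambda>z. det (A z) \<noteq> 0) (cosparse ?U)"
    using A_det sparse_in_subset[of _ UNIV ?U] by (simp add: eventually_cosparse)
  moreover have "eventually (\<lambda>z. z \<in> ?U) (cosparse ?U)"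
    by (rule eventually_in_cosparse[OF order.refl open_power_exterior])
  ultimately have "eventually (\<lambda>z. matrix_inv (A z) ** F (z ^ p) ** C = F z) (cosparse ?U)"
  proof eventually_elim
    case (elim z)
    then have "1 < norm z" using R power_exterior_gt_1 by blast
    then have "matrix_inv (A z) ** F (z ^ p) ** C = matrix_inv (A z) ** (A z ** F z)"
      using A_mult_F elim by (simp add: matrix_mul_assoc[symmetric])
    also have "\<dots> = (matrix_inv (A z) ** A z) ** F z"
      by (rule matrix_mul_assoc)
    finally show ?case
      using matrix_inv_left[OF elim(1)] by simp
  qed
  moreover have "matrix_meromorphic_on (\<lambda>z. matrix_inv (A z) ** F (z ^ p) ** C) ?U"
  proof (intro matrix_meromorphic_on_mult matrix_meromorphic_on_const)
    show "matrix_meromorphic_on (\<lambda>z. matrix_inv (A z)) ?U"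
      using matrix_meromorphic_on_inverse[OF A_meromorphic A_det]
      by (rule matrix_meromorphic_on_subset) simp
    show "matrix_meromorphic_on (\<lambda>z. F (z ^ p)) ?U"
      using Suc.IH by (rule matrix_meromorphic_on_compose)
        (auto intro!: analytic_intros simp: power_exterior_Suc_iff)
  qed
  ultimately show ?case by (rule matrix_meromorphic_on_cong)
qed

lemma F_meromorphic: "matrix_meromorphic_on F {z. 1 < norm z}"
  unfolding matrix_meromorphic_on_def meromorphic_on_meromorphic_at[of _ "{z. 1 < norm z}"]
proof (intro allI ballI)
  fix i j and z :: complex
  assume "z \<in> {z. 1 < norm z}"
  then obtain k where "z \<in> power_exterior p R k"
    using exists_power_exterior[OF p] by auto
  then show "(\<lambda>z. F z $ i $ j) meromorphic_on {z}"
    using F_meromorphic_on_power_exterior[of k] meromorphic_on_subset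
    unfolding matrix_meromorphic_on_def by blast
qed

definition orbit_singularities :: "nat \<Rightarrow> complex set" where
  "orbit_singularities k = {z. \<exists>j<k. det (A (z ^ (p ^ j))) = 0}"

lemma orbit_singularities_sparse: "orbit_singularities k sparse_in UNIV"
proof -
  have "orbit_singularities k = (\<Union>j\<in>{..<k}. {z. z ^ (p ^ j) \<in> {z. det (A z) = 0}})"
    unfolding orbit_singularities_def by auto
  also have "\<dots> sparse_in UNIV"
    using A_det p
    by (intro sparse_in_UN_finite sparse_in_UNIV_power_preimage) (auto simp: eventually_cosparse)
  finally show ?thesis .
qed

lemma not_in_orbit_singularities_Suc:
  assumes "z \<notin> orbit_singularities (Suc k)"
  shows "det (A z) \<noteq> 0" "z ^ p \<notin> orbit_singularities k" "z \<notin> orbit_singularities k"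
  using assms unfolding orbit_singularities_def
  by (force simp: power_mult[symmetric])+

lemma det_F_nonzero:
  assumes "z \<in> power_exterior p R k" "z \<notin> orbit_singularities k"
  shows "det (F z) \<noteq> 0"
  using assms
proof (induction k arbitrary: z)
  case 0
  then show ?case by (simp add: F_eq_F0 F0_det power_exterior_0)
next
  case (Suc k)
  show ?case
  proof (cases "R < norm z")
    case True
    then show ?thesis by (simp add: F_eq_F0 F0_det)
  next
    case False
    have "det (F (z ^ p)) \<noteq> 0"
      using Suc not_in_orbit_singularities_Suc power_exterior_Suc_iff by blast
    then show ?thesis
      using F_step[OF Suc.prems(1) False] not_in_orbit_singularities_Suc(1)[OF Suc.prems(2)] C_det
      by (simp add: det_mul det_matrix_inv_nonzero)
  qed
qed

lemma eventually_cosparse_exteriorI: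
  assumes "\<And>k z. z \<in> power_exterior p R k \<Longrightarrow> z \<notin> orbit_singularities (Suc k) \<Longrightarrow> P z"
  shows "\<forall>\<^sub>\<approx>z\<in>{z. 1 < norm z}. P z"
  unfolding eventually_cosparse_open_eq[OF open_Collect_less[OF continuous_on_const continuous_on_norm_id]]
proof
  fix z0 :: complex assume "z0 \<in> {z. 1 < norm z}"
  then obtain k where k: "z0 \<in> power_exterior p R k"
    using exists_power_exterior[OF p] by auto
  have "eventually (\<lambda>z. z \<in> power_exterior p R k) (at z0)"
    using open_power_exterior k by (rule eventually_at_in_open')
  moreover have "eventually (\<lambda>z. z \<notin> orbit_singularities (Suc k)) (at z0)"
    using orbit_singularities_sparse[of "Suc k"] unfolding sparse_in_open[OF open_UNIV] islimpt_iff_eventually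
    by blast
  ultimately show "eventually P (at z0)"
    by eventually_elim (use assms in blast)
qed

lemma eventually_det_F_nonzero: "\<forall>\<^sub>\<approx>z\<in>{z. 1 < norm z}. det (F z) \<noteq> 0"
  using det_F_nonzero not_in_orbit_singularities_Suc(3) by (blast intro: eventually_cosparse_exteriorI)

lemma eventually_F_solves: "\<forall>\<^sub>\<approx>z\<in>{z. 1 < norm z}. matrix_inv (phi p F z) ** A z ** F z = C"
proof (rule eventually_cosparse_exteriorI)
  fix k z
  assume z: "z \<in> power_exterior p R k" "z \<notin> orbit_singularities (Suc k)"
  have "z \<in> power_exterior p R (Suc k)"
    using power_exterior_mono[OF R, of p k] p z(1) by auto
  then have "z ^ p \<in> power_exterior p R k"
    by (simp add: power_exterior_Suc_iff)
  then have det_F_power: "det (F (z ^ p)) \<noteq> 0"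
    using z(2) not_in_orbit_singularities_Suc(2) det_F_nonzero by blast
  have "A z ** F z = F (z ^ p) ** C"
    using z R power_exterior_gt_1 not_in_orbit_singularities_Suc(1) A_mult_F by blast
  then have "matrix_inv (F (z ^ p)) ** A z ** F z = (matrix_inv (F (z ^ p)) ** F (z ^ p)) ** C"
    by (simp add: matrix_mul_assoc[symmetric])
  then show "matrix_inv (phi p F z) ** A z ** F z = C"
    by (simp add: phi_def matrix_inv_left[OF det_F_power])
qed

lemma F_meromorphic_at_infinity:
  assumes "matrix_meromorphic_on (\<lambda>w. F0 (1 / w)) {0}"
  shows "matrix_meromorphic_on (\<lambda>w. F (1 / w)) {0}"
proof (rule matrix_meromorphic_on_cong_at[OF _ assms])
  have "F0 (1 / w) = F (1 / w)" if "w \<noteq> 0" "norm w < 1 / R" for w :: complex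
    using that R by (intro F_eq_F0[symmetric]) (auto simp: norm_divide field_simps)
  then show "eventually (\<lambda>w. F0 (1 / w) = F (1 / w)) (at 0)"
    unfolding eventually_at using R by (intro exI[of _ "1 / R"]) auto
qed

end

section \<open>Regular singularity at infinity\<close>

lemma regular_singular_at_infinityE:
  assumes "regular_singular_at_infinity p A"
  obtains r T B where "0 < r"
    "matrix_meromorphic_on (\<lambda>w. T (1 / w)) {0}"
    "matrix_analytic_on (\<lambda>w. T (1 / w)) (ball 0 r - {0})"
    "\<And>w. w \<in> ball 0 r - {0} \<Longrightarrow> det (T (1 / w)) \<noteq> 0"
    "matrix_analytic_on B (ball 0 r)" "\<And>w. w \<in> ball 0 r \<Longrightarrow> det (B w) \<noteq> 0"
    "\<And>w. w \<in> ball 0 r - {0} \<Longrightarrow> B w = matrix_inv (T ((1 / w) ^ p)) ** A (1 / w) ** T (1 / w)"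
proof -
  obtain T B where T: "matrix_meromorphic_on (\<lambda>w. T (1 / w)) {0}"
      "\<forall>\<^sub>F w in at 0. det (T (1 / w)) \<noteq> 0"
    and B: "matrix_analytic_on B {0}" "det (B 0) \<noteq> 0"
      "\<forall>\<^sub>F w in at 0. B w = matrix_inv (T ((1 / w) ^ p)) ** A (1 / w) ** T (1 / w)"
    using assms unfolding regular_singular_at_infinity_def matrix_meromorphic_on_def
      matrix_analytic_on_def phi_def Let_def by blast
  have "eventually (\<lambda>w. matrix_analytic_on (\<lambda>w. T (1 / w)) {w} \<and> det (T (1 / w)) \<noteq> 0 \<and>
      matrix_analytic_on B {w} \<and> det (B w) \<noteq> 0 \<and>
      B w = matrix_inv (T ((1 / w) ^ p)) ** A (1 / w) ** T (1 / w)) (at 0)"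
    using matrix_meromorphic_on_imp_eventually_analytic[OF T(1)] T(2)
      matrix_meromorphic_on_imp_eventually_analytic[OF matrix_analytic_imp_meromorphic[OF B(1)]]
      analytic_at_neq_imp_eventually_neq[OF matrix_analytic_on_det[OF B(1)] B(2)] B(3)
    by eventually_elim blast
  then obtain r where "0 < r" and r: "\<And>w. w \<in> ball 0 r - {0} \<Longrightarrow>
      matrix_analytic_on (\<lambda>w. T (1 / w)) {w} \<and> det (T (1 / w)) \<noteq> 0 \<and>
      matrix_analytic_on B {w} \<and> det (B w) \<noteq> 0 \<and>
      B w = matrix_inv (T ((1 / w) ^ p)) ** A (1 / w) ** T (1 / w)"
    unfolding eventually_at by (auto simp: dist_commute)
  show ?thesis
  proof (rule that[OF \<open>0 < r\<close> T(1)])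
    show "matrix_analytic_on (\<lambda>w. T (1 / w)) (ball 0 r - {0})"
      using r by (subst matrix_analytic_on_analytic_at) blast
    show "matrix_analytic_on B (ball 0 r)"
      using r B(1) by (subst matrix_analytic_on_analytic_at) (metis Diff_iff singletonD)
    show "det (B w) \<noteq> 0" if "w \<in> ball 0 r" for w
      using r[of w] B(2) that by (cases "w = 0") auto
  qed (use r in auto)
qed

lemma regular_singular_solution_near_infinity:
  assumes p: "p \<ge> 2" and "regular_singular_at_infinity p A"
  obtains R F0 C where "R \<ge> 1" "matrix_analytic_on F0 {z. R < norm z}"
    "\<And>z. R < norm z \<Longrightarrow> det (F0 z) \<noteq> 0"
    "\<And>z. R < norm z \<Longrightarrow> A z ** F0 z = F0 (z ^ p) ** C"
    "det C \<noteq> 0" "matrix_meromorphic_on (\<lambda>w. F0 (1 / w)) {0}"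
proof -
  obtain r T B where "0 < r" and T: "matrix_meromorphic_on (\<lambda>w. T (1 / w)) {0}"
      "matrix_analytic_on (\<lambda>w. T (1 / w)) (ball 0 r - {0})"
      "\<And>w. w \<in> ball 0 r - {0} \<Longrightarrow> det (T (1 / w)) \<noteq> 0"
    and B: "matrix_analytic_on B (ball 0 r)" "\<And>w. w \<in> ball 0 r \<Longrightarrow> det (B w) \<noteq> 0"
      "\<And>w. w \<in> ball 0 r - {0} \<Longrightarrow> B w = matrix_inv (T ((1 / w) ^ p)) ** A (1 / w) ** T (1 / w)"
    by (rule regular_singular_at_infinityE[OF assms(2)]) blast
  obtain \<rho> G where \<rho>: "0 < \<rho>" "\<rho> \<le> r" "\<rho> \<le> 1" and G: "matrix_analytic_on G (ball 0 \<rho>)"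
      "\<And>w. w \<in> ball 0 \<rho> \<Longrightarrow> det (G w) \<noteq> 0"
      "\<And>w. w \<in> ball 0 \<rho> \<Longrightarrow> B w ** G w = G (w ^ p) ** B 0"
    using mahler_local_solution[OF p \<open>0 < r\<close> B(1,2)] by auto
  define F0 where "F0 z = T z ** G (1 / z)" for z
  have F0_inverse: "F0 (1 / w) = T (1 / w) ** G w" for w
    by (simp add: F0_def)
  have punctured: "w \<in> ball 0 r - {0}" "w ^ p \<in> ball 0 \<rho>" "w ^ p \<in> ball 0 r - {0}"
    if "w \<in> ball 0 \<rho> - {0}" for w :: complex
    using that \<rho> power_mem_ball_0[of w \<rho> p] p by auto
  have F0_eq: "A (1 / w) ** F0 (1 / w) = F0 (1 / w ^ p) ** B 0" if "w \<in> ball 0 \<rho> - {0}" for w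
  proof -
    have "det (T (1 / w ^ p)) \<noteq> 0"
      using T(3) punctured(3)[OF that] by (simp add: power_one_over)
    moreover have "(matrix_inv (T (1 / w ^ p)) ** A (1 / w) ** T (1 / w)) ** G w = G (w ^ p) ** B 0"
      using G(3)[of w] that unfolding B(3)[OF punctured(1)[OF that]] by (simp add: power_one_over)
    ultimately have "A (1 / w) ** (T (1 / w) ** G w) = (T (1 / w ^ p) ** G (w ^ p)) ** B 0"
      by (rule matrix_gauge_transform)
    then show ?thesis by (simp add: F0_def)
  qed
  show ?thesis
  proof (rule that[of "1 / \<rho>" F0 "B 0"])
    show "1 / \<rho> \<ge> 1" using \<rho> by simp
    have "matrix_analytic_on (\<lambda>w. T (1 / w) ** G w) (ball 0 \<rho> - {0})"
      using \<rho> by (intro matrix_analytic_on_mult matrix_analytic_on_subset[OF T(2)]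
          matrix_analytic_on_subset[OF G(1)]) auto
    then show "matrix_analytic_on F0 {z. 1 / \<rho> < norm z}"
      by (intro matrix_analytic_on_exterior \<rho>(1)) (simp add: F0_inverse)
    fix z :: complex assume "1 / \<rho> < norm z"
    then have z: "1 / z \<in> ball 0 \<rho> - {0}"
      using inverse_mem_punctured_ball_iff[OF \<rho>(1)] by blast
    show "det (F0 z) \<noteq> 0"
      using T(3)[of "1 / z"] G(2)[of "1 / z"] z punctured(1)[OF z] by (simp add: F0_def det_mul)
    show "A z ** F0 z = F0 (z ^ p) ** B 0"
      using F0_eq[OF z] by (simp add: power_one_over)
  next
    show "det (B 0) \<noteq> 0" using B(2) \<open>0 < r\<close> by simp
    have "matrix_analytic_on G {0}"
      using G(1) by (rule matrix_analytic_on_subset) (use \<rho> in auto)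
    then have "matrix_meromorphic_on (\<lambda>w. T (1 / w) ** G w) {0}"
      by (rule matrix_meromorphic_on_mult[OF T(1) matrix_analytic_imp_meromorphic])
    then show "matrix_meromorphic_on (\<lambda>w. F0 (1 / w)) {0}"
      by (simp add: F0_inverse)
  qed
qed

theorem mainTheorem18:
  fixes p :: nat and A :: "complex \<Rightarrow> complex^'n::finite^'n"
  assumes "p \<ge> 2"
    and "GL_rat A"
    and "regular_singular_at_infinity p A"
  shows "\<exists>(F :: complex \<Rightarrow> complex^'n^'n) (Ainf :: complex^'n^'n).
           (\<forall>i j. (\<lambda>z. F z $ i $ j) meromorphic_on {z. 1 < norm z}) \<and>
           (\<forall>i j. (\<lambda>w. F (1 / w) $ i $ j) meromorphic_on {0}) \<and>
           (\<forall>\<^sub>\<approx>z\<in>{z. 1 < norm z}. det (F z) \<noteq> 0) \<and>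
           invertible Ainf \<and>
           (\<forall>\<^sub>\<approx>z\<in>{z. 1 < norm z}. matrix_inv (phi p F z) ** A z ** F z = Ainf)"
proof -
  obtain R F0 C where "R \<ge> 1" "matrix_analytic_on F0 {z. R < norm z}"
    "\<And>z. R < norm z \<Longrightarrow> det (F0 z) \<noteq> 0" "\<And>z. R < norm z \<Longrightarrow> A z ** F0 z = F0 (z ^ p) ** C"
    "det C \<noteq> 0" and F0_infinity: "matrix_meromorphic_on (\<lambda>w. F0 (1 / w)) {0}"
    by (rule regular_singular_solution_near_infinity[OF assms(1,3)]) blast
  moreover have "matrix_meromorphic_on A UNIV" "\<forall>\<^sub>\<approx>z. det (A z) \<noteq> 0"
    using assms(2) unfolding GL_rat_def matrix_meromorphic_on_def
    by (auto intro: rational_fun_meromorphic)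
  ultimately interpret mahler_extension p R A F0 C
    using assms(1) by unfold_locales
  show ?thesis
  proof (intro exI conjI)
    show "\<forall>i j. (\<lambda>z. F z $ i $ j) meromorphic_on {z. 1 < norm z}"
      using F_meromorphic unfolding matrix_meromorphic_on_def .
    show "\<forall>i j. (\<lambda>w. F (1 / w) $ i $ j) meromorphic_on {0}"
      using F_meromorphic_at_infinity[OF F0_infinity] unfolding matrix_meromorphic_on_def .
    show "invertible C" using C_det by (simp add: invertible_det_nz)
  qed (fact eventually_det_F_nonzero eventually_F_solves)+
qed

end
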